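(* Let $1/n<\gamma\ll\tau\ll\varepsilon<1$ be constants, let $k\geq 2$ be an integer, and let $G$ be a $d$-regular oriented graph on $n$ vertices with $d\geq(1/4+\varepsilon)n$. Let $\mathcal{P}_k=\{V_{ij}:i,j\in[k]\}$ be a $(k^2,\tau,\gamma)$-partition of $G$. Then for every $i\in[k]$, $$\Big|\bigcup_{j\neq i}V_{ij}\Big|\geq\tau n\quad\text{and}\quad\Big|\bigcup_{j\neq i}V_{ji}\Big|\geq\tau n.$$
   Context: Hierarchy convention: $x\ll y$ means $x\leq f(y)$ for some implicitly given non-decreasing function $f:(0,1]\to(0,1]$; the statement asserts such functions exist, constants chosen from right to left. An oriented graph has at most one edge between any two vertices; $d$-regular means all in- and outdegrees equal $d$. A $k^2$-partition of $V(G)$ is a family $\{V_{ij}:i,j\in[k]\}$ of pairwise disjoint (possibly empty) sets with union $V(G)$; $V_{i*}=\bigcup_j V_{ij}$, $V_{*j}=\bigcup_i V_{ij}$. $E(A,B)$ is the set of edges $ab$ with $a\in A,b\in B$; bad edges $\mathcal{B}_k(\mathcal{P}_k,G)=\bigcup_{i\neq j}E(V_{i*},V_{*j})$. A $(k^2,\tau,\gamma)$-partition is a $k^2$-partition with $|\mathcal{B}_k(\mathcal{P}_k,G)|\leq\gamma n^2$ and $|V_{i*}|,|V_{*j}|\geq\tau n$ for all $i,j\in[k]$. *)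

theory Defs
  imports Complex_Main
begin

definition oriented_graph :: "'a set \<Rightarrow> ('a \<times> 'a) set \<Rightarrow> bool" where
  "oriented_graph V E \<longleftrightarrow> finite V \<and> E \<subseteq> V \<times> V \<and>
     (\<forall>x. (x, x) \<notin> E) \<and> (\<forall>x y. (x, y) \<in> E \<longrightarrow> (y, x) \<notin> E)"

definition outdeg :: "('a \<times> 'a) set \<Rightarrow> 'a \<Rightarrow> nat" where
  "outdeg E x = card {y. (x, y) \<in> E}"

definition indeg :: "('a \<times> 'a) set \<Rightarrow> 'a \<Rightarrow> nat" where
  "indeg E x = card {y. (y, x) \<in> E}"

definition regular_digraph :: "'a set \<Rightarrow> ('a \<times> 'a) set \<Rightarrow> nat \<Rightarrow> bool" where
  "regular_digraph V E d \<longleftrightarrow> (\<forall>x\<in>V. outdeg E x = d \<and> indeg E x = d)"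

definition k2_partition :: "'a set \<Rightarrow> nat \<Rightarrow> (nat \<Rightarrow> nat \<Rightarrow> 'a set) \<Rightarrow> bool" where
  "k2_partition V k P \<longleftrightarrow>
     (\<forall>i\<in>{1..k}. \<forall>j\<in>{1..k}. \<forall>i'\<in>{1..k}. \<forall>j'\<in>{1..k}.
         (i, j) \<noteq> (i', j') \<longrightarrow> P i j \<inter> P i' j' = {}) \<and>
     (\<Union>i\<in>{1..k}. \<Union>j\<in>{1..k}. P i j) = V"

definition row_part :: "nat \<Rightarrow> (nat \<Rightarrow> nat \<Rightarrow> 'a set) \<Rightarrow> nat \<Rightarrow> 'a set" where
  "row_part k P i = (\<Union>j\<in>{1..k}. P i j)"

definition col_part :: "nat \<Rightarrow> (nat \<Rightarrow> nat \<Rightarrow> 'a set) \<Rightarrow> nat \<Rightarrow> 'a set" where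
  "col_part k P j = (\<Union>i\<in>{1..k}. P i j)"

definition edges_between :: "('a \<times> 'a) set \<Rightarrow> 'a set \<Rightarrow> 'a set \<Rightarrow> ('a \<times> 'a) set" where
  "edges_between E A B = {(a, b). (a, b) \<in> E \<and> a \<in> A \<and> b \<in> B}"

definition bad_edges :: "('a \<times> 'a) set \<Rightarrow> nat \<Rightarrow> (nat \<Rightarrow> nat \<Rightarrow> 'a set) \<Rightarrow> ('a \<times> 'a) set" where
  "bad_edges E k P = (\<Union>i\<in>{1..k}. \<Union>j\<in>{1..k}.
      if i \<noteq> j then edges_between E (row_part k P i) (col_part k P j) else {})"

definition k2_tau_gamma_partition ::
  "'a set \<Rightarrow> ('a \<times> 'a) set \<Rightarrow> nat \<Rightarrow> real \<Rightarrow> real \<Rightarrow> (nat \<Rightarrow> nat \<Rightarrow> 'a set) \<Rightarrow> bool" where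
  "k2_tau_gamma_partition V E k \<tau> \<gamma> P \<longleftrightarrow>
     k2_partition V k P \<and>
     real (card (bad_edges E k P)) \<le> \<gamma> * real (card V) ^ 2 \<and>
     (\<forall>i\<in>{1..k}. real (card (row_part k P i)) \<ge> \<tau> * real (card V)
                 \<and> real (card (col_part k P i)) \<ge> \<tau> * real (card V))"

end

theory Submission
  imports Defs
begin

text \<open>
  Write \<open>R = V\<^sub>i\<^sub>*\<close> and \<open>K = V\<^sub>*\<^sub>i\<close>. Few bad edges means that almost no edge leaves \<open>R\<close>
  outside \<open>K\<close> and almost no edge enters \<open>K\<close> from outside \<open>R\<close>. Counting in-edges of \<open>K\<close> gives
  \<open>|K| \<le> |R| + 4\<gamma>n\<close>. Counting out-edges of \<open>R\<close>, of which at most \<open>|R|\<^sup>2/2\<close> stay inside \<open>R\<close>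
  because \<open>G\<close> is oriented, gives \<open>2d \<le> |R| + 2|K - R| + 2\<gamma>n/\<tau>\<close>; the same count for
  \<open>C = V - R\<close>, whose out-edges go to \<open>C\<close>, to \<open>R - K\<close> or are bad, gives
  \<open>2d \<le> |C| + 2|R - K| + 2\<gamma>n/\<tau>\<close>. Adding up and using \<open>4d \<ge> n + 4\<epsilon>n\<close> and
  \<open>\<gamma> \<le> \<tau>\<epsilon>/8 \<le> \<epsilon>/16\<close> yields \<open>|R - K| \<ge> 3\<epsilon>n/4 \<ge> \<tau>n\<close>. The bound for \<open>K - R\<close> is the same statement for the
  reversed graph and the transposed partition.
\<close>

lemma edges_between_eq: "edges_between E A B = E \<inter> A \<times> B"
  by (auto simp: edges_between_def)

lemma finite_edges_between: "finite E \<Longrightarrow> finite (edges_between E A B)"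
  by (simp add: edges_between_eq)

lemma edges_between_converse: "edges_between (E\<inverse>) A B = (edges_between E B A)\<inverse>"
  by (auto simp: edges_between_def)

lemma card_edges_between_le_mult:
  "finite A \<Longrightarrow> finite B \<Longrightarrow> card (edges_between E A B) \<le> card A * card B"
  by (metis edges_between_eq card_cartesian_product card_mono finite_SigmaI Int_lower2)

lemma card_edges_between_mono:
  "finite E \<Longrightarrow> A \<subseteq> A' \<Longrightarrow> B \<subseteq> B' \<Longrightarrow>
    card (edges_between E A B) \<le> card (edges_between E A' B')"
  by (auto simp: edges_between_eq intro!: card_mono)

lemma card_edges_between_Un_left:
  assumes "finite E" "A \<inter> A' = {}"
  shows "card (edges_between E (A \<union> A') B) =
    card (edges_between E A B) + card (edges_between E A' B)"
proof -
  have "edges_between E (A \<union> A') B = edges_between E A B \<union> edges_between E A' B"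
    by (auto simp: edges_between_def)
  moreover have "edges_between E A B \<inter> edges_between E A' B = {}"
    using assms(2) by (auto simp: edges_between_def)
  ultimately show ?thesis
    by (simp add: card_Un_disjoint finite_edges_between assms(1))
qed

lemma card_edges_between_Un_right:
  assumes "finite E" "B \<inter> B' = {}"
  shows "card (edges_between E A (B \<union> B')) =
    card (edges_between E A B) + card (edges_between E A B')"
  using card_edges_between_Un_left[of "E\<inverse>" B B' A] assms
  by (simp add: edges_between_converse)

lemma card_edges_within_le:
  assumes "\<forall>x y. (x, y) \<in> E \<longrightarrow> (y, x) \<notin> E" "finite A"
  shows "2 * card (edges_between E A A) \<le> card A * card A"
proof -
  let ?M = "edges_between E A A"
  have fin: "finite ?M" "finite (?M\<inverse>)"
    using assms(2) by (simp_all add: edges_between_eq)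
  have "?M \<inter> ?M\<inverse> = {}"
    using assms(1) by (auto simp: edges_between_def)
  then have "card ?M + card (?M\<inverse>) = card (?M \<union> ?M\<inverse>)"
    by (simp add: card_Un_disjoint fin)
  also have "\<dots> \<le> card (A \<times> A)"
    by (intro card_mono) (auto simp: assms(2) edges_between_def)
  finally show ?thesis
    by (simp add: card_cartesian_product)
qed

lemma card_out_edges_eq_sum_outdeg:
  assumes "finite E" "finite A"
  shows "card (edges_between E A UNIV) = (\<Sum>x\<in>A. outdeg E x)"
proof -
  have "edges_between E A UNIV = (SIGMA x:A. {y. (x, y) \<in> E})"
    by (auto simp: edges_between_def)
  moreover have "finite {y. (x, y) \<in> E}" for x
    by (rule finite_subset[of _ "snd ` E"]) (auto intro: rev_image_eqI simp: assms(1))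
  ultimately show ?thesis
    by (simp add: card_SigmaI assms(2) outdeg_def)
qed

lemma card_in_edges_eq_sum_indeg:
  assumes "finite E" "finite B"
  shows "card (edges_between E UNIV B) = (\<Sum>y\<in>B. indeg E y)"
  using card_out_edges_eq_sum_outdeg[of "E\<inverse>" B] assms
  by (simp add: edges_between_converse outdeg_def indeg_def)

lemma oriented_graph_finite_edges: "oriented_graph V E \<Longrightarrow> finite E"
  unfolding oriented_graph_def by (meson finite_SigmaI finite_subset)

lemma oriented_graph_converse: "oriented_graph V E \<Longrightarrow> oriented_graph V (E\<inverse>)"
  unfolding oriented_graph_def by auto

lemma regular_digraph_converse: "regular_digraph V E d \<Longrightarrow> regular_digraph V (E\<inverse>) d"
  by (simp add: regular_digraph_def outdeg_def indeg_def)

lemma le_add_divide_of_mult_le: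
  fixes a x b m r :: real
  assumes "0 < m" "m \<le> r" "0 \<le> b" "a * r \<le> x * r + b"
  shows "a \<le> x + b / m"
proof -
  have "a \<le> x + b / r"
    using assms by (simp add: field_simps)
  also have "\<dots> \<le> x + b / m"
    using assms by (simp add: divide_left_mono)
  finally show ?thesis .
qed

lemma degree_count_lower_bound:
  fixes n d r c s t \<tau> \<gamma> \<epsilon> :: real
  assumes "0 < n" "n = r + c" "\<tau> * n \<le> r" "\<tau> * n \<le> c"
    and degree: "(1/4 + \<epsilon>) * n \<le> d"
    and constants: "0 < \<tau>" "\<tau> \<le> \<epsilon> / 2" "\<epsilon> < 1" "0 \<le> \<gamma>" "\<gamma> \<le> \<tau> * \<epsilon> / 8"
    and row: "2 * d * r \<le> (r + 2 * t) * r + 2 * \<gamma> * n\<^sup>2"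
    and col: "2 * d * c \<le> (c + 2 * s) * c + 2 * \<gamma> * n\<^sup>2"
    and diff: "t * d \<le> s * d + \<gamma> * n\<^sup>2"
  shows "\<tau> * n \<le> s"
proof -
  have "0 < \<epsilon> * n" "(1/4 + \<epsilon>) * n = n / 4 + \<epsilon> * n"
    using constants \<open>0 < n\<close> by (simp_all add: algebra_simps)
  with degree have degree': "n / 4 + \<epsilon> * n \<le> d" "n / 4 \<le> d"
    by linarith+
  have "\<tau> * \<epsilon> \<le> 1/2 * \<epsilon>"
    using constants by (intro mult_right_mono) auto
  then have "\<gamma> \<le> \<epsilon> / 16"
    using constants by linarith
  moreover have "\<gamma> / \<tau> \<le> \<epsilon> / 8"
    using constants by (simp add: field_simps)
  ultimately have bounds: "\<tau> * n \<le> \<epsilon> / 2 * n" "\<gamma> / \<tau> * n \<le> \<epsilon> / 8 * n" "\<gamma> * n \<le> \<epsilon> / 16 * n"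
    using constants(2) \<open>0 < n\<close> by (simp_all only: mult_right_mono less_imp_le)
  have "0 < \<tau> * n" "0 \<le> 2 * \<gamma> * n\<^sup>2" "0 \<le> \<gamma> * n\<^sup>2"
    using constants \<open>0 < n\<close> by simp_all
  then have "2 * d \<le> (r + 2 * t) + 2 * \<gamma> * n\<^sup>2 / (\<tau> * n)"
    and "2 * d \<le> (c + 2 * s) + 2 * \<gamma> * n\<^sup>2 / (\<tau> * n)"
    and "t \<le> s + \<gamma> * n\<^sup>2 / (n / 4)"
    using le_add_divide_of_mult_le assms(3,4) row col diff degree' \<open>0 < n\<close> by simp_all
  moreover have "2 * \<gamma> * n\<^sup>2 / (\<tau> * n) = 2 * (\<gamma> / \<tau> * n)" "\<gamma> * n\<^sup>2 / (n / 4) = 4 * (\<gamma> * n)"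
    using \<open>0 < n\<close> by (simp_all add: power2_eq_square)
  ultimately show ?thesis
    using \<open>n = r + c\<close> degree' bounds by linarith
qed

context
  fixes V :: "'a set" and E :: "('a \<times> 'a) set" and d :: nat
  assumes oriented: "oriented_graph V E" and regular: "regular_digraph V E d"
begin

lemma regular_card_out_edges:
  assumes "A \<subseteq> V"
  shows "card (edges_between E A V) = d * card A"
proof -
  have "edges_between E A V = edges_between E A UNIV"
    using oriented by (auto simp: oriented_graph_def edges_between_def)
  also have "card \<dots> = (\<Sum>x\<in>A. outdeg E x)"
    using oriented assms
    by (intro card_out_edges_eq_sum_outdeg oriented_graph_finite_edges)
      (auto simp: oriented_graph_def intro: finite_subset)
  also have "\<dots> = (\<Sum>x\<in>A. d)"
    using regular assms by (intro sum.cong) (auto simp: regular_digraph_def)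
  finally show ?thesis
    by simp
qed

lemma regular_card_in_edges:
  assumes "B \<subseteq> V"
  shows "card (edges_between E V B) = d * card B"
proof -
  have "edges_between E V B = edges_between E UNIV B"
    using oriented by (auto simp: oriented_graph_def edges_between_def)
  also have "card \<dots> = (\<Sum>y\<in>B. indeg E y)"
    using oriented assms
    by (intro card_in_edges_eq_sum_indeg oriented_graph_finite_edges)
      (auto simp: oriented_graph_def intro: finite_subset)
  also have "\<dots> = (\<Sum>y\<in>B. d)"
    using regular assms by (intro sum.cong) (auto simp: regular_digraph_def)
  finally show ?thesis
    by simp
qed

lemma regular_out_edges_le:
  assumes "A \<subseteq> V" "B \<subseteq> V"
  shows "2 * d * card A \<le>
    card A * card A + 2 * card A * card (B - A) + 2 * card (edges_between E A (V - B))"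
proof -
  have fin: "finite E" "finite A" "finite (B - A)"
    using oriented_graph_finite_edges[OF oriented] oriented assms
    by (auto simp: oriented_graph_def intro: finite_subset)
  have "d * card A = card (edges_between E A (B \<union> (V - B)))"
    using regular_card_out_edges[OF assms(1)] assms(2) by (simp add: Un_absorb1)
  also have "\<dots> = card (edges_between E A B) + card (edges_between E A (V - B))"
    using fin by (intro card_edges_between_Un_right) auto
  also have "card (edges_between E A B) \<le> card (edges_between E A (A \<union> (B - A)))"
    using fin by (intro card_edges_between_mono) auto
  also have "\<dots> = card (edges_between E A A) + card (edges_between E A (B - A))"
    using fin by (intro card_edges_between_Un_right) auto
  finally have "d * card A \<le> card (edges_between E A A) + card (edges_between E A (B - A))
      + card (edges_between E A (V - B))"
    by simp
  moreover have "2 * card (edges_between E A A) \<le> card A * card A"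
    using oriented fin by (intro card_edges_within_le) (auto simp: oriented_graph_def)
  moreover have "card (edges_between E A (B - A)) \<le> card A * card (B - A)"
    using fin by (intro card_edges_between_le_mult)
  ultimately show ?thesis
    by linarith
qed

lemma regular_in_edges_le:
  assumes "A \<subseteq> V" "B \<subseteq> V"
  shows "d * card B \<le> d * card A + card (edges_between E (V - A) B)"
proof -
  have fin: "finite E"
    using oriented by (rule oriented_graph_finite_edges)
  have "d * card B = card (edges_between E (A \<union> (V - A)) B)"
    using regular_card_in_edges[OF assms(2)] assms(1) by (simp add: Un_absorb1)
  also have "\<dots> = card (edges_between E A B) + card (edges_between E (V - A) B)"
    using fin by (intro card_edges_between_Un_left) auto
  also have "card (edges_between E A B) \<le> card (edges_between E A V)"
    using fin assms(2) by (intro card_edges_between_mono) auto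
  also have "\<dots> = d * card A"
    using regular_card_out_edges[OF assms(1)] .
  finally show ?thesis
    by simp
qed

lemma card_diff_ge_if_few_crossing_edges:
  fixes \<tau> \<gamma> \<epsilon> :: real
  defines "n \<equiv> real (card V)"
  assumes R: "R \<subseteq> V" and K: "K \<subseteq> V"
    and few_out: "card (edges_between E R (V - K)) \<le> \<gamma> * n\<^sup>2"
    and few_in: "card (edges_between E (V - R) K) \<le> \<gamma> * n\<^sup>2"
    and large_R: "\<tau> * n \<le> card R" and large_compl_R: "\<tau> * n \<le> card (V - R)"
    and degree: "(1/4 + \<epsilon>) * n \<le> d"
    and constants: "0 < \<tau>" "\<tau> \<le> \<epsilon> / 2" "\<epsilon> < 1" "\<gamma> \<le> \<tau> * \<epsilon> / 8"
  shows "\<tau> * n \<le> card (R - K)"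
proof (cases "n = 0")
  case False
  then have "0 < n"
    by (simp add: n_def)
  moreover have "0 \<le> \<gamma> * n\<^sup>2"
    using few_out of_nat_0_le_iff order_trans by blast
  ultimately have "0 \<le> \<gamma>"
    by (simp add: zero_le_mult_iff)
  have "finite R" "finite K"
    using oriented R K by (auto simp: oriented_graph_def intro: finite_subset)
  have "n = real (card R) + real (card (V - R))"
    using oriented R \<open>finite R\<close> by (simp add: n_def oriented_graph_def card_Diff_subset card_mono)
  have out_bound: "2 * real d * card A
      \<le> (real (card A) + 2 * real (card (B - A))) * card A + 2 * \<gamma> * n\<^sup>2"
    if "A \<subseteq> V" "B \<subseteq> V" "card (edges_between E A (V - B)) \<le> \<gamma> * n\<^sup>2" for A B
  proof -
    have "real (2 * d * card A) \<le> real (card A * card A + 2 * card A * card (B - A)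
        + 2 * card (edges_between E A (V - B)))"
      using regular_out_edges_le[OF that(1,2)] by (simp only: of_nat_le_iff)
    with that(3) show ?thesis
      by (simp add: field_simps)
  qed
  have "V - (V - K) = K" "(V - K) - (V - R) = R - K"
    using R K by auto
  then have col: "2 * real d * card (V - R)
      \<le> (real (card (V - R)) + 2 * real (card (R - K))) * card (V - R) + 2 * \<gamma> * n\<^sup>2"
    using out_bound[of "V - R" "V - K"] few_in by simp
  have "card R = card (R \<inter> K) + card (R - K)" "card K = card (R \<inter> K) + card (K - R)"
    using card_Int_Diff[OF \<open>finite R\<close>, of K] card_Int_Diff[OF \<open>finite K\<close>, of R]
    by (simp_all add: Int_commute)
  with regular_in_edges_le[OF R K]
  have "card (K - R) * d \<le> card (R - K) * d + card (edges_between E (V - R) K)"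
    by (simp add: algebra_simps)
  then have "real (card (K - R) * d) \<le> real (card (R - K) * d + card (edges_between E (V - R) K))"
    by (simp only: of_nat_le_iff)
  with few_in have diff: "card (K - R) * real d \<le> card (R - K) * real d + \<gamma> * n\<^sup>2"
    unfolding of_nat_add of_nat_mult by linarith
  show ?thesis
    using degree_count_lower_bound[OF \<open>0 < n\<close> \<open>n = real (card R) + real (card (V - R))\<close> large_R
        large_compl_R degree constants(1-3) \<open>0 \<le> \<gamma>\<close> constants(4) out_bound[OF R K few_out] col diff] .
qed simp

end

lemma bad_edges_subset: "bad_edges E k P \<subseteq> E"
  by (auto simp: bad_edges_def edges_between_def)

lemma k2_partition_part_subset:
  "k2_partition V k P \<Longrightarrow> i \<in> {1..k} \<Longrightarrow> j \<in> {1..k} \<Longrightarrow> P i j \<subseteq> V"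
  unfolding k2_partition_def by blast

lemma row_part_subset: "k2_partition V k P \<Longrightarrow> i \<in> {1..k} \<Longrightarrow> row_part k P i \<subseteq> V"
  unfolding row_part_def using k2_partition_part_subset by blast

lemma col_part_subset: "k2_partition V k P \<Longrightarrow> j \<in> {1..k} \<Longrightarrow> col_part k P j \<subseteq> V"
  unfolding col_part_def using k2_partition_part_subset by blast

lemma row_part_disjoint:
  assumes "k2_partition V k P" "i \<in> {1..k}" "i' \<in> {1..k}" "i \<noteq> i'"
  shows "row_part k P i \<inter> row_part k P i' = {}"
  using assms unfolding k2_partition_def row_part_def by blast

lemma row_part_diff_col_part:
  "i \<in> {1..k} \<Longrightarrow> row_part k P i - col_part k P i \<subseteq> (\<Union>j\<in>{1..k} - {i}. P i j)"
  unfolding row_part_def col_part_def by blast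

lemma edges_from_row_part_subset_bad_edges:
  assumes "k2_partition V k P" "i \<in> {1..k}"
  shows "edges_between E (row_part k P i) (V - col_part k P i) \<subseteq> bad_edges E k P"
proof
  fix e assume "e \<in> edges_between E (row_part k P i) (V - col_part k P i)"
  then obtain a b where "e = (a, b)" "(a, b) \<in> E" "a \<in> row_part k P i" "b \<in> V" "b \<notin> col_part k P i"
    by (auto simp: edges_between_def)
  moreover from \<open>b \<in> V\<close> obtain i' j where "i' \<in> {1..k}" "j \<in> {1..k}" "b \<in> P i' j"
    using assms(1) unfolding k2_partition_def by blast
  ultimately show "e \<in> bad_edges E k P"
    using assms(2) unfolding bad_edges_def edges_between_def col_part_def by fastforce
qed

lemma edges_into_col_part_subset_bad_edges:
  assumes "k2_partition V k P" "i \<in> {1..k}"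
  shows "edges_between E (V - row_part k P i) (col_part k P i) \<subseteq> bad_edges E k P"
proof
  fix e assume "e \<in> edges_between E (V - row_part k P i) (col_part k P i)"
  then obtain a b where "e = (a, b)" "(a, b) \<in> E" "a \<in> V" "a \<notin> row_part k P i" "b \<in> col_part k P i"
    by (auto simp: edges_between_def)
  moreover from \<open>a \<in> V\<close> obtain i' j where "i' \<in> {1..k}" "j \<in> {1..k}" "a \<in> P i' j"
    using assms(1) unfolding k2_partition_def by blast
  ultimately show "e \<in> bad_edges E k P"
    using assms(2) unfolding bad_edges_def edges_between_def row_part_def by fastforce
qed

lemma k2_tau_gamma_partition_transpose:
  assumes "k2_tau_gamma_partition V E k \<tau> \<gamma> P"
  shows "k2_tau_gamma_partition V (E\<inverse>) k \<tau> \<gamma> (\<lambda>i j. P j i)"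
proof -
  have "row_part k (\<lambda>i j. P j i) = col_part k P" "col_part k (\<lambda>i j. P j i) = row_part k P"
    by (auto simp: row_part_def col_part_def)
  moreover have "bad_edges (E\<inverse>) k (\<lambda>i j. P j i) = (bad_edges E k P)\<inverse>"
    unfolding bad_edges_def edges_between_def calculation by auto
  moreover have "k2_partition V k (\<lambda>i j. P j i)"
    using assms unfolding k2_tau_gamma_partition_def k2_partition_def by blast
  ultimately show ?thesis
    using assms by (simp add: k2_tau_gamma_partition_def)
qed

lemma k2_tau_gamma_partition_off_diagonal_row_ge:
  fixes \<tau> \<gamma> \<epsilon> :: real
  assumes "oriented_graph V E" "regular_digraph V E d"
    and degree: "(1/4 + \<epsilon>) * card V \<le> d"
    and constants: "0 < \<tau>" "\<tau> \<le> \<epsilon> / 2" "\<epsilon> < 1" "\<gamma> \<le> \<tau> * \<epsilon> / 8"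
    and "2 \<le> k" and partition: "k2_tau_gamma_partition V E k \<tau> \<gamma> P" and i: "i \<in> {1..k}"
  shows "\<tau> * card V \<le> card (\<Union>j\<in>{1..k} - {i}. P i j)"
proof -
  define R K where "R = row_part k P i" and "K = col_part k P i"
  have k2: "k2_partition V k P"
    and few_bad: "card (bad_edges E k P) \<le> \<gamma> * real (card V) ^ 2"
    and large: "\<And>i. i \<in> {1..k} \<Longrightarrow> \<tau> * card V \<le> card (row_part k P i)"
    using partition by (auto simp: k2_tau_gamma_partition_def)
  have "finite V" "finite (bad_edges E k P)"
    using assms(1) finite_subset[OF bad_edges_subset oriented_graph_finite_edges]
    by (auto simp: oriented_graph_def)
  have "R \<subseteq> V" "K \<subseteq> V"
    using row_part_subset[OF k2 i] col_part_subset[OF k2 i] by (simp_all add: R_def K_def)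
  obtain i' where "i' \<in> {1..k}" "i' \<noteq> i"
    using \<open>2 \<le> k\<close> by (intro that[of "if i = 1 then 2 else 1"]) auto
  then have "row_part k P i' \<subseteq> V - R"
    using k2 i row_part_subset row_part_disjoint unfolding R_def by blast
  then have "\<tau> * card V \<le> card (V - R)"
    using large[OF \<open>i' \<in> {1..k}\<close>] card_mono \<open>finite V\<close> by (meson finite_Diff of_nat_mono order_trans)
  moreover have "card (edges_between E R (V - K)) \<le> \<gamma> * real (card V) ^ 2"
    "card (edges_between E (V - R) K) \<le> \<gamma> * real (card V) ^ 2"
    using edges_from_row_part_subset_bad_edges[OF k2 i] edges_into_col_part_subset_bad_edges[OF k2 i]
      card_mono[OF \<open>finite (bad_edges E k P)\<close>] few_bad
    unfolding R_def K_def by (meson of_nat_mono order_trans)+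
  ultimately have "\<tau> * card V \<le> card (R - K)"
    using card_diff_ge_if_few_crossing_edges[OF assms(1,2) \<open>R \<subseteq> V\<close> \<open>K \<subseteq> V\<close>] large[OF i]
      degree constants unfolding R_def by blast
  also have "card (R - K) \<le> card (\<Union>j\<in>{1..k} - {i}. P i j)"
  proof (rule card_mono)
    show "finite (\<Union>j\<in>{1..k} - {i}. P i j)"
      using row_part_subset[OF k2 i] \<open>finite V\<close> unfolding row_part_def by (blast intro: finite_subset)
    show "R - K \<subseteq> (\<Union>j\<in>{1..k} - {i}. P i j)"
      using row_part_diff_col_part[OF i] unfolding R_def K_def .
  qed
  finally show ?thesis
    by simp
qed

theorem proposition3p11:
  "\<forall>\<epsilon>::real. 0 < \<epsilon> \<and> \<epsilon> < 1 \<longrightarrow>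
    (\<exists>\<tau>0>0. \<forall>\<tau>::real. 0 < \<tau> \<and> \<tau> \<le> \<tau>0 \<longrightarrow>
      (\<exists>\<gamma>0>0. \<forall>\<gamma>::real. 0 < \<gamma> \<and> \<gamma> \<le> \<gamma>0 \<longrightarrow>
        (\<forall>(V::'a set) E (d::nat) (k::nat) P.
           oriented_graph V E \<and> regular_digraph V E d \<and>
           1 / real (card V) < \<gamma> \<and>
           real d \<ge> (1/4 + \<epsilon>) * real (card V) \<and> k \<ge> 2 \<and>
           k2_tau_gamma_partition V E k \<tau> \<gamma> P \<longrightarrow>
           (\<forall>i\<in>{1..k}.
              real (card (\<Union>j\<in>{1..k} - {i}. P i j)) \<ge> \<tau> * real (card V) \<and>
              real (card (\<Union>j\<in>{1..k} - {i}. P j i)) \<ge> \<tau> * real (card V)))))"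
proof (intro allI impI exI conjI ballI)
  fix \<epsilon> :: real
  assume \<epsilon>: "0 < \<epsilon> \<and> \<epsilon> < 1"
  show "0 < \<epsilon> / 2"
    using \<epsilon> by simp
  fix \<tau> :: real
  assume \<tau>: "0 < \<tau> \<and> \<tau> \<le> \<epsilon> / 2"
  show "0 < \<tau> * \<epsilon> / 8"
    using \<epsilon> \<tau> by simp
  fix \<gamma> :: real and V :: "'a set" and E d k P i
  assume "0 < \<gamma> \<and> \<gamma> \<le> \<tau> * \<epsilon> / 8"
    and "oriented_graph V E \<and> regular_digraph V E d \<and> 1 / real (card V) < \<gamma> \<and>
      (1/4 + \<epsilon>) * real (card V) \<le> real d \<and> 2 \<le> k \<and> k2_tau_gamma_partition V E k \<tau> \<gamma> P"
    and i: "i \<in> {1..k}"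
  then have constants: "0 < \<tau>" "\<tau> \<le> \<epsilon> / 2" "\<epsilon> < 1" "\<gamma> \<le> \<tau> * \<epsilon> / 8"
    and G: "oriented_graph V E" "regular_digraph V E d" "(1/4 + \<epsilon>) * real (card V) \<le> real d"
    and "2 \<le> k" and partition: "k2_tau_gamma_partition V E k \<tau> \<gamma> P"
    using \<epsilon> \<tau> by auto
  show "\<tau> * real (card V) \<le> real (card (\<Union>j\<in>{1..k} - {i}. P i j))"
    using k2_tau_gamma_partition_off_diagonal_row_ge[OF G constants \<open>2 \<le> k\<close> partition i] .
  show "\<tau> * real (card V) \<le> real (card (\<Union>j\<in>{1..k} - {i}. P j i))"
    using k2_tau_gamma_partition_off_diagonal_row_ge[OF oriented_graph_converse[OF G(1)]
        regular_digraph_converse[OF G(2)] G(3) constants \<open>2 \<le> k\<close>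
        k2_tau_gamma_partition_transpose[OF partition] i] .
qed

end
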